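(* If $f\in\mathcal S(X)$ is skew invertible (as an element of $\mathcal F(X)$), then its skew inverse $f^{\langle-1\rangle}$ belongs to $\mathcal S(X)$.
   Context: Let $K$ be a skew field, $K^*=K\setminus\{0\}$, and $X$ a nonempty set with a left $K^*$-action $(a,x)\mapsto{}^{a}x$. $\mathcal F(X)$ is the set of functions $X\to K$ with pointwise addition; the constant function with value $a\in K$ is denoted $a$. The skew product is $(f\diamond g)(x)=f({}^{g(x)}x)\,g(x)$ if $g(x)\neq0$ and $0$ if $g(x)=0$. A function $f$ is skew convex if $f\diamond(a+b)=f\diamond a+f\diamond b$ for all $a,b\in K$; $\mathcal S(X)$ is the set of skew-convex functions. $f\in\mathcal F(X)$ is skew invertible if there is $g\in\mathcal F(X)$ with $f\diamond g=g\diamond f=1$; then $g$ is called the skew inverse $f^{\langle-1\rangle}$. *)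

theory Defs
  imports Main
begin

text \<open>A left action of the multiplicative group K* of a skew field K (type class
division_ring) on a set X (the type 'x). The action map is total on K, but only its
values at nonzero scalars are constrained/used.\<close>
definition left_action :: "('k::division_ring \<Rightarrow> 'x \<Rightarrow> 'x) \<Rightarrow> bool" where
  "left_action act \<longleftrightarrow>
     (\<forall>x. act 1 x = x) \<and>
     (\<forall>a b x. a \<noteq> 0 \<longrightarrow> b \<noteq> 0 \<longrightarrow> act (a * b) x = act a (act b x))"

definition skew_prod ::
  "('k::division_ring \<Rightarrow> 'x \<Rightarrow> 'x) \<Rightarrow> ('x \<Rightarrow> 'k) \<Rightarrow> ('x \<Rightarrow> 'k) \<Rightarrow> ('x \<Rightarrow> 'k)" where
  "skew_prod act f g = (\<lambda>x. if g x = 0 then 0 else f (act (g x) x) * g x)"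

definition skew_convex :: "('k::division_ring \<Rightarrow> 'x \<Rightarrow> 'x) \<Rightarrow> ('x \<Rightarrow> 'k) \<Rightarrow> bool" where
  "skew_convex act f \<longleftrightarrow>
     (\<forall>a b x. skew_prod act f (\<lambda>_. a + b) x =
               skew_prod act f (\<lambda>_. a) x + skew_prod act f (\<lambda>_. b) x)"

definition skew_inverse :: "('k::division_ring \<Rightarrow> 'x \<Rightarrow> 'x) \<Rightarrow> ('x \<Rightarrow> 'k) \<Rightarrow> ('x \<Rightarrow> 'k) \<Rightarrow> bool" where
  "skew_inverse act f g \<longleftrightarrow> skew_prod act f g = (\<lambda>_. 1) \<and> skew_prod act g f = (\<lambda>_. 1)"

end

theory Submission
  imports Defs
begin

text \<open>The skew product is associative with left unit 1, and for skew convex f the map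
  h \<mapsto> f \<diamond> h is additive on all of \<open>\<F>(X)\<close>, since (f \<diamond> h)(x) depends only on h(x).
  If g is the skew inverse of f, then f \<diamond> (g \<diamond> (a + b)) = a + b = f \<diamond> (g \<diamond> a + g \<diamond> b),
  and cancelling f on the left (i.e. multiplying by g) gives skew convexity of g.\<close>

lemma skew_prod_one_left: "skew_prod act (\<lambda>_. 1) h = h"
  by (auto simp: skew_prod_def)

lemma skew_prod_assoc:
  assumes "left_action act"
  shows "skew_prod act f (skew_prod act g h) = skew_prod act (skew_prod act f g) h"
proof
  fix x
  show "skew_prod act f (skew_prod act g h) x = skew_prod act (skew_prod act f g) h x"
  proof (cases "h x = 0 \<or> g (act (h x) x) = 0")
    case True
    then show ?thesis by (auto simp: skew_prod_def)
  next
    case False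
    then have "act (g (act (h x) x) * h x) x = act (g (act (h x) x)) (act (h x) x)"
      using assms by (simp add: left_action_def)
    with False show ?thesis by (simp add: skew_prod_def mult.assoc)
  qed
qed

lemma skew_prod_at: "skew_prod act f h x = skew_prod act f (\<lambda>_. h x) x"
  by (simp add: skew_prod_def)

lemma skew_convex_prod_add:
  assumes "skew_convex act f"
  shows "skew_prod act f (\<lambda>x. h x + k x) = (\<lambda>x. skew_prod act f h x + skew_prod act f k x)"
proof
  fix x
  show "skew_prod act f (\<lambda>x. h x + k x) x = skew_prod act f h x + skew_prod act f k x"
    using assms unfolding skew_convex_def by (subst (1 2 3) skew_prod_at) blast
qed

lemma skew_inverse_cancel_left:
  assumes "left_action act" and "skew_inverse act f g"
    and "skew_prod act f h = skew_prod act f k"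
  shows "h = k"
proof -
  have "h = skew_prod act (skew_prod act g f) h"
    using assms(2) by (simp add: skew_inverse_def skew_prod_one_left)
  also have "\<dots> = skew_prod act (skew_prod act g f) k"
    using assms by (simp add: skew_prod_assoc[symmetric])
  also have "\<dots> = k"
    using assms(2) by (simp add: skew_inverse_def skew_prod_one_left)
  finally show ?thesis .
qed

theorem lemma2p8:
  fixes act :: "'k::division_ring \<Rightarrow> 'x \<Rightarrow> 'x"
    and f g :: "'x \<Rightarrow> 'k"
  assumes "left_action act"
    and "skew_convex act f"
    and "skew_inverse act f g"
  shows "skew_convex act g"
proof -
  have f_after_g: "skew_prod act f (skew_prod act g h) = h" for h
    using assms(1,3) by (simp add: skew_prod_assoc skew_inverse_def skew_prod_one_left)
  have "skew_prod act g (\<lambda>_. a + b)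
          = (\<lambda>x. skew_prod act g (\<lambda>_. a) x + skew_prod act g (\<lambda>_. b) x)" for a b
  proof (rule skew_inverse_cancel_left[OF assms(1,3)])
    show "skew_prod act f (skew_prod act g (\<lambda>_. a + b))
        = skew_prod act f (\<lambda>x. skew_prod act g (\<lambda>_. a) x + skew_prod act g (\<lambda>_. b) x)"
      by (simp add: f_after_g skew_convex_prod_add[OF assms(2)])
  qed
  then show ?thesis
    unfolding skew_convex_def by simp
qed

end
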